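(* Let $m$ be an odd positive integer and let $D_{2m}=\langle a,b\mid a^m=b^2=1,\ b^{-1}ab=a^{-1}\rangle$ be the dihedral group of order $2m$. For every prime $p$ dividing $m$ write $m=p^{k_p}m_p$ with $p\nmid m_p$, and let "$u\in_p\langle v\rangle$" abbreviate $\bigvee_{j=0}^{p^{k_p}-1}(u=v^j)$. Then the following d-identities form a basis of d-identities of $D_{2m}$ (i.e. they all hold in $D_{2m}$, and every group satisfying all of them is isomorphic to a section of $D_{2m}$): (1) $\omega_{2m}=\bigvee_{0\le i<j\le 2m}(x_i=x_j)$; (2) $(x^2=1)\vee(y^2=1)\vee(xy=yx)$; (3) $(x^2=1)\vee(x^m=1)$; (4) for every prime $p$ dividing $m$: $(x_1^2=1)\vee(x_2^2=1)\vee(x_1^{m_p}\in_p\langle x_2^{m_p}\rangle)\vee(x_2^{m_p}\in_p\langle x_1^{m_p}\rangle)$; (5) $(x_1^m=1)\vee(x_2^m=1)\vee((x_1x_2)^m=1)$.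
   Context: A d-identity (disjunctive identity) is a universally quantified formula $\forall x_1\dots x_k\,[(f_1=1)\vee\dots\vee(f_n=1)]$ with the $f_i$ words in the free group on the variables; $u=v$ abbreviates $uv^{-1}=1$. A group satisfies it if it is true for all assignments of group elements. For a group $G$, $\mathrm{dvar}(G)$ is the class of groups satisfying every d-identity satisfied by $G$; for finite $G$ it is exactly the class of groups isomorphic to sections (quotients of subgroups) of $G$. A set of d-identities is a basis of d-identities of $G$ if all its members hold in $G$ and every group satisfying them lies in $\mathrm{dvar}(G)$. *)

theory Defs
  imports "HOL-Algebra.Algebra" "HOL-Computational_Algebra.Primes"
begin

text \<open>Concrete model of the dihedral group D_{2m} of order 2m: the element (i, s)
  stands for a^i b^(if s then 1 else 0), with 0 <= i < m. Using b a^j = a^(-j) b,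
  (a^i b^s)(a^j b^t) = a^(i +- j) b^(s+t).\<close>
definition dihedral :: "nat \<Rightarrow> (nat \<times> bool) monoid" where
  "dihedral m = \<lparr> carrier = {0..<m} \<times> UNIV,
     monoid.mult = (\<lambda>(i, s) (j, t). ((if s then i + (m - j) else i + j) mod m, s \<noteq> t)),
     one = (0, False) \<rparr>"

definition is_section_of :: "('b, 'c) monoid_scheme \<Rightarrow> ('a, 'd) monoid_scheme \<Rightarrow> bool" where
  "is_section_of H G \<longleftrightarrow> (\<exists>K N. subgroup K G \<and> normal N (G\<lparr>carrier := K\<rparr>)
      \<and> H \<cong> (G\<lparr>carrier := K\<rparr>) Mod N)"

definition did1 :: "nat \<Rightarrow> ('a, 'b) monoid_scheme \<Rightarrow> bool" where
  "did1 m G \<longleftrightarrow> (\<forall>x :: nat \<Rightarrow> 'a. (\<forall>i\<le>2*m. x i \<in> carrier G) \<longrightarrow>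
      (\<exists>i j. i < j \<and> j \<le> 2*m \<and> x i = x j))"

definition did2 :: "('a, 'b) monoid_scheme \<Rightarrow> bool" where
  "did2 G \<longleftrightarrow> (\<forall>x\<in>carrier G. \<forall>y\<in>carrier G.
      x [^]\<^bsub>G\<^esub> (2::nat) = \<one>\<^bsub>G\<^esub> \<or> y [^]\<^bsub>G\<^esub> (2::nat) = \<one>\<^bsub>G\<^esub> \<or> x \<otimes>\<^bsub>G\<^esub> y = y \<otimes>\<^bsub>G\<^esub> x)"

definition did3 :: "nat \<Rightarrow> ('a, 'b) monoid_scheme \<Rightarrow> bool" where
  "did3 m G \<longleftrightarrow> (\<forall>x\<in>carrier G.
      x [^]\<^bsub>G\<^esub> (2::nat) = \<one>\<^bsub>G\<^esub> \<or> x [^]\<^bsub>G\<^esub> m = \<one>\<^bsub>G\<^esub>)"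

definition in_p :: "nat \<Rightarrow> nat \<Rightarrow> ('a, 'b) monoid_scheme \<Rightarrow> 'a \<Rightarrow> 'a \<Rightarrow> bool" where
  "in_p m p G u v \<longleftrightarrow> (\<exists>j < p ^ multiplicity p m. u = v [^]\<^bsub>G\<^esub> j)"

definition did4 :: "nat \<Rightarrow> nat \<Rightarrow> ('a, 'b) monoid_scheme \<Rightarrow> bool" where
  "did4 m p G \<longleftrightarrow> (let mp = m div p ^ multiplicity p m in
     \<forall>x1\<in>carrier G. \<forall>x2\<in>carrier G.
      x1 [^]\<^bsub>G\<^esub> (2::nat) = \<one>\<^bsub>G\<^esub> \<or> x2 [^]\<^bsub>G\<^esub> (2::nat) = \<one>\<^bsub>G\<^esub>
      \<or> in_p m p G (x1 [^]\<^bsub>G\<^esub> mp) (x2 [^]\<^bsub>G\<^esub> mp)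
      \<or> in_p m p G (x2 [^]\<^bsub>G\<^esub> mp) (x1 [^]\<^bsub>G\<^esub> mp))"

definition did5 :: "nat \<Rightarrow> ('a, 'b) monoid_scheme \<Rightarrow> bool" where
  "did5 m G \<longleftrightarrow> (\<forall>x1\<in>carrier G. \<forall>x2\<in>carrier G.
      x1 [^]\<^bsub>G\<^esub> m = \<one>\<^bsub>G\<^esub> \<or> x2 [^]\<^bsub>G\<^esub> m = \<one>\<^bsub>G\<^esub>
      \<or> (x1 \<otimes>\<^bsub>G\<^esub> x2) [^]\<^bsub>G\<^esub> m = \<one>\<^bsub>G\<^esub>)"

definition satisfies_all :: "nat \<Rightarrow> ('a, 'b) monoid_scheme \<Rightarrow> bool" where
  "satisfies_all m G \<longleftrightarrow> did1 m G \<and> did2 G \<and> did3 m G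
     \<and> (\<forall>p::nat. Factorial_Ring.prime p \<and> p dvd m \<longrightarrow> did4 m p G) \<and> did5 m G"

end

theory Submission
  imports Defs
begin

text \<open>Identity (1) bounds the order of a group \<open>G\<close> satisfying the identities by \<open>2m\<close>. Since
  \<open>m\<close> is odd, a nontrivial \<open>x\<close> with \<open>x\<^sup>m = 1\<close> is not an involution, so by (2) these
  elements commute and form an abelian subgroup \<open>N\<close>; by (3) every element outside \<open>N\<close> is an
  involution, and by (5) \<open>N\<close> has index at most 2. For each prime \<open>p\<close>, identity (4) says that
  the cyclic subgroups generated by the elements of the Sylow \<open>p\<close>-subgroup \<open>N\<^bsup>m\<^sub>p\<^esup>\<close>
  of \<open>N\<close> form a chain, so that Sylow subgroup is cyclic, and hence \<open>N = \<langle>g\<rangle>\<close>. An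
  involution \<open>t \<notin> N\<close> inverts \<open>N\<close>, because \<open>(a t)\<^sup>2 = 1\<close> for \<open>a \<in> N\<close>. Therefore
  \<open>(i, s) \<mapsto> g\<^sup>i t\<^sup>s\<close> maps \<open>D\<^sub>2\<^sub>m\<close>, or its rotation subgroup when \<open>G = N\<close>, onto \<open>G\<close>,
  and \<open>G\<close> is a quotient of a subgroup of \<open>D\<^sub>2\<^sub>m\<close>.\<close>

lemma mod_mult_solvable:
  fixes i j q :: nat
  assumes "q > 0" "gcd j q dvd i"
  shows "\<exists>e<q. i mod q = j * e mod q"
proof (cases "j = 0")
  case True
  with assms show ?thesis by auto
next
  case False
  obtain x y where "j * x = q * y + gcd j q" using bezout_nat[OF False] by blast
  moreover obtain c where "i = gcd j q * c" using assms(2) by blast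
  ultimately have "j * (x * c) = q * (y * c) + i" by (simp add: algebra_simps)
  then have "i mod q = j * (x * c) mod q" by (metis mod_mult_self3 mult.commute)
  then have "i mod q = j * (x * c mod q) mod q" by (simp add: mod_mult_right_eq)
  with assms(1) show ?thesis by (intro exI[of _ "x * c mod q"]) auto
qed

text \<open>In \<open>\<int>/p\<^sup>k\<close> the ideals generated by \<open>i\<close> and \<open>j\<close> are comparable, since their gcds
  with \<open>p\<^sup>k\<close> are both powers of \<open>p\<close>.\<close>

lemma prime_power_mod_mult_comparable:
  fixes p i j :: nat
  assumes "Factorial_Ring.prime p"
  shows "(\<exists>e < p ^ k. i mod p ^ k = j * e mod p ^ k) \<or> (\<exists>e < p ^ k. j mod p ^ k = i * e mod p ^ k)"
proof -
  have q: "p ^ k > 0" using assms by (simp add: prime_gt_0_nat)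
  obtain a b where "gcd i (p ^ k) = p ^ a" "gcd j (p ^ k) = p ^ b"
    using divides_primepow_nat[OF assms] by (meson gcd_dvd2)
  then have "gcd j (p ^ k) dvd gcd i (p ^ k) \<or> gcd i (p ^ k) dvd gcd j (p ^ k)"
    by (metis le_imp_power_dvd nle_le)
  then have "gcd j (p ^ k) dvd i \<or> gcd i (p ^ k) dvd j"
    by (meson dvd_trans gcd_dvd1)
  then show ?thesis using mod_mult_solvable[OF q] by blast
qed

lemma prime_power_part_split:
  fixes n p :: nat
  assumes p: "Factorial_Ring.prime p" "p dvd n" and "n > 0"
  defines "q \<equiv> p ^ multiplicity p n"
  shows "n = q * (n div q)" "1 < q" "coprime q (n div q)"
    and "\<And>p'. Factorial_Ring.prime p' \<Longrightarrow> p' dvd n div q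
      \<Longrightarrow> q * (n div q div p' ^ multiplicity p' (n div q)) = n div p' ^ multiplicity p' n"
proof -
  show n: "n = q * (n div q)" unfolding q_def by (simp add: multiplicity_dvd)
  have "multiplicity p n > 0" using assms by (simp add: prime_multiplicity_gt_zero_iff)
  then show "1 < q" unfolding q_def using prime_gt_1_nat[OF p(1)] one_less_power by blast
  have not_dvd: "\<not> p dvd n div q" unfolding q_def
    using multiplicity_decompose[of n p] \<open>n > 0\<close> prime_gt_1_nat[OF p(1)] by simp
  then show "coprime q (n div q)" unfolding q_def using p
    by (simp add: prime_imp_coprime coprime_power_left_iff)
  fix p' :: nat assume p': "Factorial_Ring.prime p'" "p' dvd n div q"
  have "\<not> p' dvd q"
  proof
    assume "p' dvd q"
    then have "p' = p" unfolding q_def using p'(1) p(1) by (metis prime_dvd_power primes_dvd_imp_eq)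
    with p' not_dvd show False by simp
  qed
  have "q \<noteq> 0" "n div q \<noteq> 0" using n \<open>n > 0\<close> by (metis mult_0 mult_0_right not_gr0)+
  then have "multiplicity p' (q * (n div q)) = multiplicity p' (n div q)"
    using p'(1) \<open>\<not> p' dvd q\<close>
    by (simp add: prime_elem_multiplicity_mult_distrib not_dvd_imp_multiplicity_0)
  then show "q * (n div q div p' ^ multiplicity p' (n div q)) = n div p' ^ multiplicity p' n"
    using n by (metis div_mult_swap multiplicity_dvd)
qed

section \<open>The dihedral group\<close>

lemma dihedral_carrier [simp]: "carrier (dihedral m) = {0..<m} \<times> UNIV"
  by (simp add: dihedral_def)

lemma dihedral_one [simp]: "\<one>\<^bsub>dihedral m\<^esub> = (0, False)"
  by (simp add: dihedral_def)

lemma dihedral_mult [simp]: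
  "(i, s) \<otimes>\<^bsub>dihedral m\<^esub> (j, t) = ((if s then i + (m - j) else i + j) mod m, s \<noteq> t)"
  by (simp add: dihedral_def)

text \<open>Associativity is easiest to check in \<open>\<int>\<close>, where the truncated subtraction \<open>m - j\<close>
  becomes an honest negation.\<close>

lemma dihedral_mult_int:
  assumes "j < m"
  shows "(i, s) \<otimes>\<^bsub>dihedral m\<^esub> (j, t)
    = (nat ((int i + (if s then - int j else int j)) mod int m), s \<noteq> t)"
proof -
  have "int (i + (m - j)) = (int i - int j) + int m" using assms by simp
  then have "int ((i + (m - j)) mod m) = (int i - int j) mod int m"
    by (metis mod_add_self2 of_nat_mod)
  then have "(i + (m - j)) mod m = nat ((int i - int j) mod int m)"
    by (metis nat_int)
  moreover have "(i + j) mod m = nat ((int i + int j) mod int m)"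
    by (metis nat_int of_nat_add of_nat_mod)
  ultimately show ?thesis by simp
qed

lemma group_dihedral: assumes "m > 0" shows "group (dihedral m)"
proof (rule groupI)
  have lt: "nat (k mod int m) < m" for k using assms by (simp add: nat_less_iff)
  fix x y z
  assume "x \<in> carrier (dihedral m)" "y \<in> carrier (dihedral m)" "z \<in> carrier (dihedral m)"
  then obtain i s j t k u where "x = (i, s)" "y = (j, t)" "z = (k, u)" "i < m" "j < m" "k < m"
    by auto
  then show "x \<otimes>\<^bsub>dihedral m\<^esub> y \<otimes>\<^bsub>dihedral m\<^esub> z = x \<otimes>\<^bsub>dihedral m\<^esub> (y \<otimes>\<^bsub>dihedral m\<^esub> z)"
    by (simp only: dihedral_mult_int lt)
      (cases s; cases t; cases u; simp add: mod_simps algebra_simps)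
next
  fix x assume "x \<in> carrier (dihedral m)"
  then obtain i s where x: "x = (i, s)" "i < m" by auto
  show "\<exists>y\<in>carrier (dihedral m). y \<otimes>\<^bsub>dihedral m\<^esub> x = \<one>\<^bsub>dihedral m\<^esub>"
  proof (cases s)
    case True
    with x show ?thesis by (intro bexI[of _ "(i, True)"]) auto
  next
    case False
    with x assms show ?thesis
      by (intro bexI[of _ "((m - i) mod m, False)"]) (auto simp: mod_add_left_eq)
  qed
qed (use assms in auto)

lemma dihedral_pow_rotation:
  "(i, False) [^]\<^bsub>dihedral m\<^esub> (k::nat) = (i * k mod m, False)"
  by (induction k) (simp_all add: mod_add_right_eq algebra_simps)

lemma dihedral_pow_reflection:
  "i < m \<Longrightarrow> (i, True) [^]\<^bsub>dihedral m\<^esub> (k::nat) = (if even k then (0, False) else (i, True))"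
  by (induction k) simp_all

lemma subgroup_dihedral_rotations:
  assumes "m > 0" shows "subgroup ({..<m} \<times> {False}) (dihedral m)"
proof (rule group.subgroupI[OF group_dihedral[OF assms]])
  fix x assume "x \<in> {..<m} \<times> {False}"
  then obtain i where x: "x = (i, False)" "i < m" by auto
  then have "((m - i) mod m, False) \<otimes>\<^bsub>dihedral m\<^esub> x = \<one>\<^bsub>dihedral m\<^esub>"
    by (simp add: mod_add_left_eq)
  then have "inv\<^bsub>dihedral m\<^esub> x = ((m - i) mod m, False)"
    using x assms by (intro group.inv_equality[OF group_dihedral[OF assms]]) auto
  with assms show "inv\<^bsub>dihedral m\<^esub> x \<in> {..<m} \<times> {False}" by simp
qed (use assms in auto)

lemma did1_iff_card_le: "did1 m G \<longleftrightarrow> finite (carrier G) \<and> card (carrier G) \<le> 2 * m"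
proof
  assume did1: "did1 m G"
  show "finite (carrier G) \<and> card (carrier G) \<le> 2 * m"
  proof (rule ccontr)
    assume large: "\<not> (finite (carrier G) \<and> card (carrier G) \<le> 2 * m)"
    have "\<exists>S\<subseteq>carrier G. finite S \<and> card S = Suc (2 * m)"
    proof (cases "finite (carrier G)")
      case True
      with large have "Suc (2 * m) \<le> card (carrier G)" by simp
      then show ?thesis by (meson obtain_subset_with_card_n)
    next
      case False
      then show ?thesis using infinite_arbitrarily_large by blast
    qed
    then obtain S where S: "S \<subseteq> carrier G" "finite S" "card S = Suc (2 * m)" by blast
    then obtain x where x: "bij_betw x {0..<Suc (2 * m)} S"
      using ex_bij_betw_nat_finite by metis
    then have "\<forall>i\<le>2 * m. x i \<in> carrier G" using S(1) bij_betwE by fastforce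
    then obtain i j where ij: "i < j" "j \<le> 2 * m" "x i = x j" using did1 unfolding did1_def by blast
    then have "i \<in> {0..<Suc (2 * m)}" "j \<in> {0..<Suc (2 * m)}" by auto
    with ij have "i = j" using bij_betw_imp_inj_on[OF x] inj_onD by metis
    with ij show False by simp
  qed
next
  assume card: "finite (carrier G) \<and> card (carrier G) \<le> 2 * m"
  show "did1 m G" unfolding did1_def
  proof (intro allI impI)
    fix x :: "nat \<Rightarrow> _" assume x: "\<forall>i\<le>2 * m. x i \<in> carrier G"
    show "\<exists>i j. i < j \<and> j \<le> 2 * m \<and> x i = x j"
    proof (rule ccontr)
      assume "\<not> ?thesis"
      then have "inj_on x {..2 * m}"
        by (intro inj_onI) (metis atMost_iff linorder_neqE_nat)
      then have "card (x ` {..2 * m}) = Suc (2 * m)" by (simp add: card_image)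
      moreover have "x ` {..2 * m} \<subseteq> carrier G" using x by auto
      ultimately have "Suc (2 * m) \<le> card (carrier G)" using card by (metis card_mono)
      with card show False by simp
    qed
  qed
qed

lemma dihedral_did1: "did1 m (dihedral m)"
  by (simp add: did1_iff_card_le card_cartesian_product)

lemma dihedral_did2: "did2 (dihedral m)"
  unfolding did2_def
proof (intro ballI)
  fix x y assume "x \<in> carrier (dihedral m)" "y \<in> carrier (dihedral m)"
  then obtain i s j t where "x = (i, s)" "y = (j, t)" "i < m" "j < m" by auto
  then show "x [^]\<^bsub>dihedral m\<^esub> (2::nat) = \<one>\<^bsub>dihedral m\<^esub> \<or> y [^]\<^bsub>dihedral m\<^esub> (2::nat) = \<one>\<^bsub>dihedral m\<^esub>
    \<or> x \<otimes>\<^bsub>dihedral m\<^esub> y = y \<otimes>\<^bsub>dihedral m\<^esub> x"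
    by (cases s; cases t) (simp_all add: dihedral_pow_reflection add.commute)
qed

lemma dihedral_did3: "did3 m (dihedral m)"
  unfolding did3_def
proof
  fix x assume "x \<in> carrier (dihedral m)"
  then obtain i s where "x = (i, s)" "i < m" by auto
  then show "x [^]\<^bsub>dihedral m\<^esub> (2::nat) = \<one>\<^bsub>dihedral m\<^esub> \<or> x [^]\<^bsub>dihedral m\<^esub> m = \<one>\<^bsub>dihedral m\<^esub>"
    by (cases s) (simp_all add: dihedral_pow_reflection dihedral_pow_rotation)
qed

lemma dihedral_did5: "did5 m (dihedral m)"
  unfolding did5_def
proof (intro ballI)
  fix x y assume "x \<in> carrier (dihedral m)" "y \<in> carrier (dihedral m)"
  then obtain i s j t where "x = (i, s)" "y = (j, t)" by auto
  then show "x [^]\<^bsub>dihedral m\<^esub> m = \<one>\<^bsub>dihedral m\<^esub> \<or> y [^]\<^bsub>dihedral m\<^esub> m = \<one>\<^bsub>dihedral m\<^esub>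
    \<or> (x \<otimes>\<^bsub>dihedral m\<^esub> y) [^]\<^bsub>dihedral m\<^esub> m = \<one>\<^bsub>dihedral m\<^esub>"
    by (cases s; cases t) (simp_all add: dihedral_pow_rotation)
qed

lemma dihedral_rotation_pow_cofactor:
  assumes "m = q * r" and "i mod q = j * e mod q"
  shows "(i, False) [^]\<^bsub>dihedral m\<^esub> r = ((j, False) [^]\<^bsub>dihedral m\<^esub> r) [^]\<^bsub>dihedral m\<^esub> e"
proof -
  have "i * r mod m = (i mod q) * r" using assms(1) by (simp add: mod_mult_mult2)
  also have "\<dots> = j * e * r mod m" using assms by (simp add: mod_mult_mult2)
  also have "\<dots> = (j * r mod m) * e mod m" by (metis mod_mult_left_eq mult.assoc mult.commute)
  finally show ?thesis by (simp add: dihedral_pow_rotation)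
qed

lemma dihedral_did4:
  assumes p: "Factorial_Ring.prime p"
  shows "did4 m p (dihedral m)"
  unfolding did4_def Let_def
proof (intro ballI)
  define q where "q = p ^ multiplicity p m"
  have m: "m = q * (m div q)" unfolding q_def by (simp add: multiplicity_dvd)
  fix x y assume "x \<in> carrier (dihedral m)" "y \<in> carrier (dihedral m)"
  then obtain i s j t where xy: "x = (i, s)" "y = (j, t)" "i < m" "j < m" by auto
  show "x [^]\<^bsub>dihedral m\<^esub> (2::nat) = \<one>\<^bsub>dihedral m\<^esub> \<or> y [^]\<^bsub>dihedral m\<^esub> (2::nat) = \<one>\<^bsub>dihedral m\<^esub>
    \<or> in_p m p (dihedral m) (x [^]\<^bsub>dihedral m\<^esub> (m div q)) (y [^]\<^bsub>dihedral m\<^esub> (m div q))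
    \<or> in_p m p (dihedral m) (y [^]\<^bsub>dihedral m\<^esub> (m div q)) (x [^]\<^bsub>dihedral m\<^esub> (m div q))"
  proof (cases "s \<or> t")
    case True
    with xy show ?thesis by (auto simp: dihedral_pow_reflection)
  next
    case False
    then have "x = (i, False)" "y = (j, False)" using xy by auto
    moreover have "(\<exists>e < q. i mod q = j * e mod q) \<or> (\<exists>e < q. j mod q = i * e mod q)"
      unfolding q_def by (rule prime_power_mod_mult_comparable[OF p])
    ultimately show ?thesis
      unfolding in_p_def q_def[symmetric] using dihedral_rotation_pow_cofactor[OF m] by blast
  qed
qed

section \<open>A criterion for cyclicity\<close>

definition cyclic_chain :: "('a, 'b) monoid_scheme \<Rightarrow> 'a set \<Rightarrow> bool" where
  "cyclic_chain G A \<longleftrightarrow> (\<forall>x\<in>A. \<forall>y\<in>A. x \<in> generate G {y} \<or> y \<in> generate G {x})"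

context group
begin

lemma subgroup_nat_pow_closed: "subgroup H G \<Longrightarrow> x \<in> H \<Longrightarrow> x [^] (k::nat) \<in> H"
  using subgroup_int_pow_closed[of H x "int k"] by (simp add: int_pow_int)

lemma pow_commute:
  assumes "x \<otimes> y = y \<otimes> x" "x \<in> carrier G" "y \<in> carrier G"
  shows "x [^] (a::nat) \<otimes> y [^] (b::nat) = y [^] b \<otimes> x [^] a"
proof -
  have "y \<otimes> x [^] a = x [^] a \<otimes> y" using group_commutes_pow assms by simp
  then show ?thesis using group_commutes_pow[of y "x [^] a" b] assms by simp
qed

lemma generate_singleton_mono:
  "x \<in> carrier G \<Longrightarrow> y \<in> generate G {x} \<Longrightarrow> generate G {y} \<subseteq> generate G {x}"
  by (simp add: generate_is_subgroup generate_subgroup_incl)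

lemma cyclic_chain_has_greatest:
  assumes "finite A" "A \<noteq> {}" "A \<subseteq> carrier G" "cyclic_chain G A"
  shows "\<exists>w\<in>A. A \<subseteq> generate G {w}"
proof -
  let ?C = "(\<lambda>x. generate G {x}) ` A"
  have "subset.chain UNIV ?C"
    unfolding subset_chain_def
  proof (intro conjI ballI subset_UNIV)
    fix U V assume "U \<in> ?C" "V \<in> ?C"
    then obtain x y where "x \<in> A" "y \<in> A" "U = generate G {x}" "V = generate G {y}" by blast
    with assms(3,4) show "U \<subseteq> V \<or> V \<subseteq> U"
      unfolding cyclic_chain_def using generate_singleton_mono by blast
  qed
  then have "\<Union>?C \<in> ?C" using assms(1,2) by (simp add: Union_in_chain)
  then obtain w where "w \<in> A" "\<Union>?C = generate G {w}" by blast
  moreover have "A \<subseteq> \<Union>?C" by (auto intro: generate.incl)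
  ultimately show ?thesis by auto
qed

lemma mem_subgroup_if_coprime_pows:
  fixes q r :: nat
  assumes H: "subgroup H G" and x: "x \<in> carrier G"
    and "x [^] q \<in> H" "x [^] r \<in> H" "coprime q r"
  shows "x \<in> H"
proof (cases "q = 0")
  case True
  with \<open>coprime q r\<close> have "r = 1" by simp
  with assms show ?thesis by simp
next
  case False
  then obtain a b where "q * a = r * b + 1"
    using bezout_nat[of q r] \<open>coprime q r\<close> by auto
  then have "x [^] (q * a) = x [^] (r * b) \<otimes> x" using x by (simp add: nat_pow_mult)
  then have "x = inv (x [^] (r * b)) \<otimes> x [^] (q * a)" using x by (simp add: inv_solve_left)
  moreover have "x [^] (q * a) \<in> H" "x [^] (r * b) \<in> H"
    using assms(3,4) subgroup_nat_pow_closed[OF H] x by (simp_all flip: nat_pow_pow)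
  ultimately show ?thesis using subgroup.m_closed[OF H] subgroup.m_inv_closed[OF H] by metis
qed

lemma subgroup_pow_image:
  assumes N: "subgroup N G" and comm: "\<And>x y. x \<in> N \<Longrightarrow> y \<in> N \<Longrightarrow> x \<otimes> y = y \<otimes> x"
  shows "subgroup ((\<lambda>x. x [^] (k::nat)) ` N) G"
proof (rule subgroupI)
  have car: "x \<in> carrier G" if "x \<in> N" for x using N that subgroup.subset by blast
  show "(\<lambda>x. x [^] k) ` N \<subseteq> carrier G" using car by auto
  show "(\<lambda>x. x [^] k) ` N \<noteq> {}" using subgroup.one_closed[OF N] by blast
  fix a b assume "a \<in> (\<lambda>x. x [^] k) ` N" "b \<in> (\<lambda>x. x [^] k) ` N"
  then obtain x y where xy: "x \<in> N" "y \<in> N" "a = x [^] k" "b = y [^] k" by blast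
  have "inv x \<in> N" "x \<otimes> y \<in> N"
    using xy subgroup.m_inv_closed[OF N] subgroup.m_closed[OF N] by auto
  moreover have "inv a = inv x [^] k" using xy car nat_pow_inv by simp
  moreover have "a \<otimes> b = (x \<otimes> y) [^] k"
    using xy car pow_mult_distrib[OF comm[OF xy(1,2)]] by simp
  ultimately show "inv a \<in> (\<lambda>x. x [^] k) ` N" "a \<otimes> b \<in> (\<lambda>x. x [^] k) ` N"
    by (simp_all add: rev_image_eqI)
qed

lemma generate_mult_of_coprime_parts:
  fixes q r :: nat
  assumes N: "subgroup N G" and comm: "\<And>x y. x \<in> N \<Longrightarrow> y \<in> N \<Longrightarrow> x \<otimes> y = y \<otimes> x"
    and zw: "z \<in> N" "w \<in> N" "z [^] r = \<one>" "w [^] q = \<one>" and cop: "coprime q r"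
    and parts: "\<And>x. x \<in> N \<Longrightarrow> x [^] q \<in> generate G {z}" "\<And>x. x \<in> N \<Longrightarrow> x [^] r \<in> generate G {w}"
  shows "N = generate G {z \<otimes> w}"
proof -
  let ?H = "generate G {z \<otimes> w}"
  have car: "z \<in> carrier G" "w \<in> carrier G" using N zw subgroup.subset by blast+
  have H: "subgroup ?H G" using car by (simp add: generate_is_subgroup)
  have one: "\<one> \<in> ?H" using subgroup.one_closed[OF H] .
  have pow: "(z \<otimes> w) [^] k = z [^] k \<otimes> w [^] k" for k :: nat
    by (rule pow_mult_distrib[OF comm[OF zw(1,2)] car])
  have gen: "(z \<otimes> w) [^] k \<in> ?H" for k :: nat
    using H by (intro subgroup_nat_pow_closed) (auto intro: generate.incl)
  have "z [^] q \<in> ?H" using gen[of q] by (simp add: pow zw car)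
  then have "z \<in> ?H" using mem_subgroup_if_coprime_pows[OF H car(1) _ _ cop] zw(3) one by simp
  have "w [^] r \<in> ?H" using gen[of r] by (simp add: pow zw car)
  moreover have "w [^] q \<in> ?H" using zw(4) one by simp
  moreover have "coprime r q" using cop by (simp add: coprime_commute)
  ultimately have "w \<in> ?H" by (rule mem_subgroup_if_coprime_pows[OF H car(2)])
  with \<open>z \<in> ?H\<close> have sub: "generate G {z} \<subseteq> ?H" "generate G {w} \<subseteq> ?H"
    using H by (simp_all add: generate_subgroup_incl)
  have "x \<in> ?H" if "x \<in> N" for x
  proof (rule mem_subgroup_if_coprime_pows[OF H _ _ _ cop])
    show "x \<in> carrier G" using N that subgroup.subset by blast
    show "x [^] q \<in> ?H" "x [^] r \<in> ?H" using parts that sub by blast+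
  qed
  moreover have "?H \<subseteq> N" using N zw subgroup.m_closed[OF N] by (simp add: generate_subgroup_incl)
  ultimately show ?thesis by blast
qed

text \<open>The image of \<open>N\<close> under \<open>x \<mapsto> x\<^bsup>n div p\<^sup>k\<^esup>\<close> (\<open>p\<^sup>k\<close> the exact power of \<open>p\<close> dividing \<open>n\<close>)
  is its Sylow \<open>p\<close>-subgroup; if it is a chain of cyclic subgroups it is cyclic, and the cyclic
  Sylow subgroups are glued together one prime at a time.\<close>

lemma cyclic_if_prime_cofactor_pows_chain:
  fixes n :: nat
  assumes "subgroup N G" "finite N" "\<And>x y. x \<in> N \<Longrightarrow> y \<in> N \<Longrightarrow> x \<otimes> y = y \<otimes> x"
    and "n > 0" "\<And>x. x \<in> N \<Longrightarrow> x [^] n = \<one>"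
    and "\<And>p. Factorial_Ring.prime p \<Longrightarrow> p dvd n
      \<Longrightarrow> cyclic_chain G ((\<lambda>x. x [^] (n div p ^ multiplicity p n)) ` N)"
  shows "\<exists>g\<in>N. N = generate G {g}"
  using assms
proof (induction n arbitrary: N rule: less_induct)
  case (less n)
  note N = less.prems(1) and fin = less.prems(2) and comm = less.prems(3)
    and exp = less.prems(5) and chain = less.prems(6)
  have car: "x \<in> carrier G" if "x \<in> N" for x using N that subgroup.subset by blast
  show ?case
  proof (cases "n = 1")
    case True
    then have "x = \<one>" if "x \<in> N" for x using exp[OF that] car[OF that] by simp
    then have "N = {\<one>}" using subgroup.one_closed[OF N] by blast
    then show ?thesis by (simp add: generate_one)
  next
    case False
    then obtain p :: nat where p: "Factorial_Ring.prime p" "p dvd n" using prime_factor_nat by blast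
    define q where "q = p ^ multiplicity p n"
    define r where "r = n div q"
    note split = prime_power_part_split[OF p less.prems(4), folded q_def, folded r_def]
    have r: "0 < r" "r < n" using split(1,2) less.prems(4) by (auto intro: gr0I)
    let ?N' = "(\<lambda>x. x [^] q) ` N"
    have "\<exists>z\<in>?N'. ?N' = generate G {z}"
    proof (rule less.IH[OF r(2) _ _ _ r(1)])
      show "subgroup ?N' G" using subgroup_pow_image[OF N comm] .
      show "finite ?N'" using fin by simp
      show "x \<otimes> y = y \<otimes> x" if "x \<in> ?N'" "y \<in> ?N'" for x y
        using that car comm pow_commute by auto
      show "x [^] r = \<one>" if "x \<in> ?N'" for x
        using that car exp split(1) by (auto simp: nat_pow_pow)
      fix p' :: nat assume p': "Factorial_Ring.prime p'" "p' dvd r"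
      have "cyclic_chain G ((\<lambda>x. x [^] (n div p' ^ multiplicity p' n)) ` N)"
        using chain p' split(1) by (metis dvd_mult)
      then show "cyclic_chain G ((\<lambda>y. y [^] (r div p' ^ multiplicity p' r)) ` ?N')"
        using car split(4)[OF p'] by (simp add: image_image nat_pow_pow)
    qed
    then obtain z where z: "z \<in> ?N'" "?N' = generate G {z}" by blast
    have "cyclic_chain G ((\<lambda>x. x [^] r) ` N)" using chain[OF p] by (simp add: r_def q_def)
    then obtain w where w: "w \<in> (\<lambda>x. x [^] r) ` N" "(\<lambda>x. x [^] r) ` N \<subseteq> generate G {w}"
      using cyclic_chain_has_greatest[of "(\<lambda>x. x [^] r) ` N"] fin car subgroup.one_closed[OF N]
      by blast
    have "N = generate G {z \<otimes> w}"
    proof (rule generate_mult_of_coprime_parts[OF N comm _ _ _ _ split(3)])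
      show "z \<in> N" "w \<in> N" using z(1) w(1) subgroup_nat_pow_closed[OF N] by auto
      show "z [^] r = \<one>" "w [^] q = \<one>"
        using z(1) w(1) car exp split(1) by (auto simp: nat_pow_pow mult.commute)
      show "x [^] q \<in> generate G {z}" "x [^] r \<in> generate G {w}" if "x \<in> N" for x
        using that z(2) w(2) by auto
    qed
    then show ?thesis using z(1) w(1) subgroup_nat_pow_closed[OF N] subgroup.m_closed[OF N] by blast
  qed
qed

end

section \<open>Groups satisfying the identities\<close>

definition unity_roots :: "('a, 'b) monoid_scheme \<Rightarrow> nat \<Rightarrow> 'a set" where
  "unity_roots G m = {x \<in> carrier G. x [^]\<^bsub>G\<^esub> m = \<one>\<^bsub>G\<^esub>}"

context group
begin

lemma eq_one_if_square_and_odd_pow_eq_one: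
  fixes m :: nat
  assumes "odd m" "x \<in> carrier G" "x [^] (2::nat) = \<one>" "x [^] m = \<one>"
  shows "x = \<one>"
proof -
  obtain k where "m = 2 * k + 1" using \<open>odd m\<close> oddE by blast
  then have "x [^] m = (x [^] (2::nat)) [^] k \<otimes> x" using assms(2) by (simp add: nat_pow_pow)
  with assms show ?thesis by simp
qed

lemma unity_roots_commute:
  assumes "odd m" "did2 G" "x \<in> unity_roots G m" "y \<in> unity_roots G m"
  shows "x \<otimes> y = y \<otimes> x"
proof (cases "x = \<one> \<or> y = \<one>")
  case True
  with assms(3,4) show ?thesis by (auto simp: unity_roots_def)
next
  case False
  with assms have "x [^] (2::nat) \<noteq> \<one>" "y [^] (2::nat) \<noteq> \<one>"
    using eq_one_if_square_and_odd_pow_eq_one by (auto simp: unity_roots_def)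
  with assms(2-4) show ?thesis unfolding did2_def unity_roots_def by blast
qed

lemma subgroup_unity_roots:
  assumes comm: "\<And>x y. x \<in> unity_roots G m \<Longrightarrow> y \<in> unity_roots G m \<Longrightarrow> x \<otimes> y = y \<otimes> x"
  shows "subgroup (unity_roots G m) G"
proof (rule subgroupI)
  fix x y assume x: "x \<in> unity_roots G m" and y: "y \<in> unity_roots G m"
  then show "inv x \<in> unity_roots G m" by (simp add: unity_roots_def nat_pow_inv)
  have "(x \<otimes> y) [^] m = x [^] m \<otimes> y [^] m"
    using x y pow_mult_distrib[OF comm[OF x y]] by (simp add: unity_roots_def)
  with x y show "x \<otimes> y \<in> unity_roots G m" by (simp add: unity_roots_def)
qed (auto simp: unity_roots_def)

lemma in_p_imp_mem_generate: "v \<in> carrier G \<Longrightarrow> in_p m p G u v \<Longrightarrow> u \<in> generate G {v}"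
  unfolding in_p_def
  using subgroup_nat_pow_closed[OF generate_is_subgroup generate.incl[of v "{v}"]] by auto

lemma unity_roots_cofactor_pows_chain:
  assumes "odd m" "did4 m p G"
  shows "cyclic_chain G ((\<lambda>x. x [^] (m div p ^ multiplicity p m)) ` unity_roots G m)"
  unfolding cyclic_chain_def
proof (intro ballI)
  let ?e = "m div p ^ multiplicity p m"
  fix a b assume "a \<in> (\<lambda>x. x [^] ?e) ` unity_roots G m" "b \<in> (\<lambda>x. x [^] ?e) ` unity_roots G m"
  then obtain x y where x: "x \<in> unity_roots G m" and y: "y \<in> unity_roots G m"
    and ab: "a = x [^] ?e" "b = y [^] ?e" by blast
  have "x [^] ?e \<in> generate G {y [^] ?e} \<or> y [^] ?e \<in> generate G {x [^] ?e}"
  proof (cases "x = \<one> \<or> y = \<one>")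
    case True
    then show ?thesis by (auto intro: generate.one)
  next
    case False
    with x y assms(1) have "x [^] (2::nat) \<noteq> \<one>" "y [^] (2::nat) \<noteq> \<one>"
      using eq_one_if_square_and_odd_pow_eq_one by (auto simp: unity_roots_def)
    with x y assms(2) have "in_p m p G (x [^] ?e) (y [^] ?e) \<or> in_p m p G (y [^] ?e) (x [^] ?e)"
      unfolding did4_def Let_def unity_roots_def by blast
    with x y show ?thesis using in_p_imp_mem_generate by (auto simp: unity_roots_def)
  qed
  then show "a \<in> generate G {b} \<or> b \<in> generate G {a}" using ab by simp
qed

lemma pow_mod_exponent:
  fixes m k :: nat
  assumes "g \<in> carrier G" "g [^] m = \<one>"
  shows "g [^] (k mod m) = g [^] k"
proof -
  have "g [^] k = g [^] (m * (k div m) + k mod m)" by simp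
  also have "\<dots> = (g [^] m) [^] (k div m) \<otimes> g [^] (k mod m)"
    using assms(1) by (simp add: nat_pow_pow nat_pow_mult)
  finally have "g [^] k = (g [^] m) [^] (k div m) \<otimes> g [^] (k mod m)" .
  with assms show ?thesis by simp
qed

lemma unity_roots_cyclic:
  assumes "finite (carrier G)" "odd m" "m > 0" "did2 G"
    and "\<And>p. Factorial_Ring.prime p \<Longrightarrow> p dvd m \<Longrightarrow> did4 m p G"
  shows "\<exists>g\<in>unity_roots G m. unity_roots G m = (\<lambda>i. g [^] i) ` {..<m}"
proof -
  let ?R = "unity_roots G m"
  have comm: "\<And>x y. x \<in> ?R \<Longrightarrow> y \<in> ?R \<Longrightarrow> x \<otimes> y = y \<otimes> x"
    using unity_roots_commute assms(2,4) by blast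
  have "\<exists>g\<in>?R. ?R = generate G {g}"
  proof (rule cyclic_if_prime_cofactor_pows_chain[OF subgroup_unity_roots[OF comm] _ comm \<open>m > 0\<close>])
    show "finite ?R" using assms(1) by (simp add: unity_roots_def)
    show "x [^] m = \<one>" if "x \<in> ?R" for x using that by (simp add: unity_roots_def)
    show "cyclic_chain G ((\<lambda>x. x [^] (m div p ^ multiplicity p m)) ` ?R)"
      if "Factorial_Ring.prime p" "p dvd m" for p
      using unity_roots_cofactor_pows_chain assms(2,5) that by blast
  qed
  then obtain g where g: "g \<in> ?R" "?R = generate G {g}" by blast
  then have "generate G {g} = {g [^] k | k. k \<in> (UNIV :: nat set)}"
    using assms(1) by (simp add: generate_pow_on_finite_carrier unity_roots_def)
  also have "\<dots> = (\<lambda>i. g [^] i) ` {..<m}"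
    using g(1) \<open>m > 0\<close> pow_mod_exponent[of g m] unfolding unity_roots_def
    by (auto simp: image_iff) (metis lessThan_iff mod_less_divisor)
  finally have "?R = (\<lambda>i. g [^] i) ` {..<m}" using g(2) by simp
  with g(1) show ?thesis by blast
qed

lemma did3_square_eq_one:
  "did3 m G \<Longrightarrow> x \<in> carrier G \<Longrightarrow> x \<notin> unity_roots G m \<Longrightarrow> x \<otimes> x = \<one>"
  unfolding did3_def unity_roots_def by (auto simp: numeral_2_eq_2)

lemma did3_conj_eq_inv:
  assumes "did3 m G" "subgroup (unity_roots G m) G"
    and a: "a \<in> unity_roots G m" and t: "t \<in> carrier G" "t \<notin> unity_roots G m"
  shows "t \<otimes> a \<otimes> t = inv a"
proof -
  have acar: "a \<in> carrier G" using a by (simp add: unity_roots_def)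
  have "a \<otimes> t \<notin> unity_roots G m"
  proof
    assume "a \<otimes> t \<in> unity_roots G m"
    then have "inv a \<otimes> (a \<otimes> t) \<in> unity_roots G m"
      using assms(2) a subgroup.m_closed subgroup.m_inv_closed by metis
    with t acar show False by (simp add: m_assoc [symmetric])
  qed
  then have "a \<otimes> t \<otimes> (a \<otimes> t) = \<one>" using did3_square_eq_one assms(1) t acar by simp
  then have "a \<otimes> (t \<otimes> a \<otimes> t) = \<one>" using t acar by (simp add: m_assoc)
  moreover have tat: "t \<otimes> a \<otimes> t \<in> carrier G" using t acar by simp
  ultimately have "t \<otimes> a \<otimes> t \<otimes> a = \<one>" by (rule inv_comm[OF _ acar])
  then show ?thesis by (rule inv_equality[OF _ acar tat, symmetric])
qed

lemma did5_carrier_eq_coset_union: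
  assumes "did5 m G" "subgroup (unity_roots G m) G"
    and t: "t \<in> carrier G" "t \<notin> unity_roots G m" "t \<otimes> t = \<one>"
  shows "carrier G = unity_roots G m \<union> (\<lambda>a. a \<otimes> t) ` unity_roots G m"
proof
  show "unity_roots G m \<union> (\<lambda>a. a \<otimes> t) ` unity_roots G m \<subseteq> carrier G"
    using t by (auto simp: unity_roots_def)
  show "carrier G \<subseteq> unity_roots G m \<union> (\<lambda>a. a \<otimes> t) ` unity_roots G m"
  proof
    fix x assume x: "x \<in> carrier G"
    show "x \<in> unity_roots G m \<union> (\<lambda>a. a \<otimes> t) ` unity_roots G m"
    proof (cases "x \<in> unity_roots G m")
      case False
      with x t assms(1) have "x \<otimes> t \<in> unity_roots G m"
        unfolding did5_def unity_roots_def by auto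
      moreover have "x = x \<otimes> t \<otimes> t" using x t by (simp add: m_assoc)
      ultimately show ?thesis by blast
    qed simp
  qed
qed

end

context group
begin

lemma inverting_involution_swap_pow:
  fixes m j :: nat
  assumes g: "g \<in> carrier G" "g [^] m = \<one>"
    and t: "t \<in> carrier G" "t \<otimes> t = \<one>" "t \<otimes> g \<otimes> t = inv g" and "j \<le> m"
  shows "t \<otimes> g [^] j = g [^] (m - j) \<otimes> t"
proof -
  have tt: "t \<otimes> (t \<otimes> x) = x" if "x \<in> carrier G" for x
    using t that by (simp flip: m_assoc)
  have conj: "t \<otimes> g [^] k \<otimes> t = inv g [^] k" for k :: nat
  proof (induction k)
    case (Suc k)
    have "t \<otimes> g [^] Suc k \<otimes> t = (t \<otimes> g [^] k \<otimes> t) \<otimes> (t \<otimes> g \<otimes> t)"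
      using g t(1) by (simp add: m_assoc tt)
    with Suc t show ?case by simp
  qed (use t in simp)
  have "g [^] (m - j) \<otimes> g [^] j = \<one>" using g \<open>j \<le> m\<close> nat_pow_mult[of g "m - j" j] by simp
  then have "g [^] (m - j) = inv g [^] j" using g by (simp add: nat_pow_inv inv_equality)
  then have "g [^] (m - j) \<otimes> t = t \<otimes> g [^] j \<otimes> t \<otimes> t" using conj by simp
  also have "\<dots> = t \<otimes> g [^] j" using g t by (simp add: m_assoc)
  finally show ?thesis by simp
qed

lemma dihedral_hom:
  assumes g: "g \<in> carrier G" "g [^] m = \<one>"
    and t: "t \<in> carrier G" "t \<otimes> t = \<one>" "t \<otimes> g \<otimes> t = inv g"
  shows "(\<lambda>(i, s). g [^] i \<otimes> (if s then t else \<one>)) \<in> hom (dihedral m) G"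
proof (rule homI)
  fix x y assume "x \<in> carrier (dihedral m)" "y \<in> carrier (dihedral m)"
  then obtain i s j u where xy: "x = (i, s)" "y = (j, u)" "j < m" by auto
  have mod: "g [^] (k mod m) = g [^] k" for k using pow_mod_exponent g by blast
  show "(case x \<otimes>\<^bsub>dihedral m\<^esub> y of (i, s) \<Rightarrow> g [^] i \<otimes> (if s then t else \<one>))
    = (case x of (i, s) \<Rightarrow> g [^] i \<otimes> (if s then t else \<one>))
      \<otimes> (case y of (i, s) \<Rightarrow> g [^] i \<otimes> (if s then t else \<one>))"
  proof (cases s)
    case True
    define r where "r = (if u then t else \<one>)"
    have r: "r \<in> carrier G" using t by (simp add: r_def)
    have "g [^] i \<otimes> t \<otimes> (g [^] j \<otimes> r) = g [^] i \<otimes> (t \<otimes> g [^] j) \<otimes> r"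
      using g t r by (simp add: m_assoc)
    also have "\<dots> = g [^] i \<otimes> g [^] (m - j) \<otimes> (t \<otimes> r)"
      using g t r xy(3) by (simp add: inverting_involution_swap_pow m_assoc)
    finally show ?thesis using True xy g t
      by (cases u) (simp_all add: r_def mod nat_pow_mult)
  next
    case False
    with xy g t show ?thesis by (cases u) (simp_all add: mod nat_pow_mult flip: m_assoc)
  qed
qed (use g t in auto)

lemma dihedral_hom_image:
  assumes "g \<in> carrier G" "t \<in> carrier G"
  shows "(\<lambda>(i, s). g [^] i \<otimes> (if s then t else \<one>)) ` carrier (dihedral m)
    = (\<lambda>i. g [^] i) ` {..<m} \<union> (\<lambda>a. a \<otimes> t) ` (\<lambda>i. g [^] i) ` {..<m}"
    (is "?f ` _ = ?A \<union> ?B")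
proof (intro equalityI subsetI)
  fix y assume "y \<in> ?f ` carrier (dihedral m)"
  then obtain i s where "i < m" "y = ?f (i, s)" by auto
  with assms show "y \<in> ?A \<union> ?B" by (cases s) auto
next
  fix y assume "y \<in> ?A \<union> ?B"
  then obtain i s where "i < m" "y = ?f (i, s)"
  proof
    assume "y \<in> ?A"
    with assms that[of _ False] show thesis by auto
  next
    assume "y \<in> ?B"
    with assms that[of _ True] show thesis by auto
  qed
  then show "y \<in> ?f ` carrier (dihedral m)" by (intro rev_image_eqI[of "(i, s)"]) auto
qed

lemma dihedral_rotations_hom:
  assumes "g \<in> carrier G" "g [^] m = \<one>"
  shows "(\<lambda>(i, s). g [^] i) \<in> hom ((dihedral m)\<lparr>carrier := {..<m} \<times> {False}\<rparr>) G"
  using assms pow_mod_exponent by (auto intro!: homI simp: nat_pow_mult)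

end

lemma is_section_of_if_hom_onto:
  assumes "group D" "subgroup K D" "group G"
    and f: "f \<in> hom (D\<lparr>carrier := K\<rparr>) G" "f ` K = carrier G"
  shows "is_section_of G D"
proof -
  have "group (D\<lparr>carrier := K\<rparr>)" by (rule subgroup.subgroup_is_group[OF assms(2,1)])
  then interpret group_hom "D\<lparr>carrier := K\<rparr>" G f
    using assms(3) f(1) by (simp add: group_hom_def group_hom_axioms_def)
  have "D\<lparr>carrier := K\<rparr> Mod kernel (D\<lparr>carrier := K\<rparr>) G f \<cong> G"
    using FactGroup_iso f(2) by simp
  then have "G \<cong> D\<lparr>carrier := K\<rparr> Mod kernel (D\<lparr>carrier := K\<rparr>) G f"
    by (simp add: group.iso_sym normal.factorgroup_is_group normal_kernel)
  then show ?thesis unfolding is_section_of_def using assms(2) normal_kernel by blast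
qed

lemma (in group) is_section_of_dihedral_if_satisfies_all:
  assumes "odd m" "m > 0" "satisfies_all m G"
  shows "is_section_of G (dihedral m)"
proof -
  let ?R = "unity_roots G m"
  have did1: "did1 m G" and did2: "did2 G" and did3: "did3 m G" and did5: "did5 m G"
    and did4: "\<And>p. Factorial_Ring.prime p \<Longrightarrow> p dvd m \<Longrightarrow> did4 m p G"
    using assms(3) unfolding satisfies_all_def by auto
  have fin: "finite (carrier G)" using did1 by (simp add: did1_iff_card_le)
  have R: "subgroup ?R G" using subgroup_unity_roots unity_roots_commute assms(1) did2 by blast
  obtain g where g: "g \<in> ?R" "?R = (\<lambda>i. g [^] i) ` {..<m}"
    using unity_roots_cyclic[OF fin assms(1,2) did2 did4] by blast
  then have gcar: "g \<in> carrier G" "g [^] m = \<one>" by (simp_all add: unity_roots_def)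
  note D = group_dihedral[OF assms(2)]
  show ?thesis
  proof (cases "carrier G = ?R")
    case True
    with g have "(\<lambda>(i, s). g [^] i) ` ({..<m} \<times> {False}) = carrier G" by auto
    with dihedral_rotations_hom[OF gcar] show ?thesis
      by (intro is_section_of_if_hom_onto[OF D subgroup_dihedral_rotations[OF assms(2)] is_group])
  next
    case False
    then obtain t where t: "t \<in> carrier G" "t \<notin> ?R" by (auto simp: unity_roots_def)
    have tt: "t \<otimes> t = \<one>" using did3_square_eq_one[OF did3 t] .
    let ?f = "\<lambda>(i, s). g [^] i \<otimes> (if s then t else \<one>)"
    have "?f ` carrier (dihedral m) = ?R \<union> (\<lambda>a. a \<otimes> t) ` ?R"
      using dihedral_hom_image[OF gcar(1) t(1)] g(2) by simp
    also have "\<dots> = carrier G" using did5_carrier_eq_coset_union[OF did5 R t tt] ..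
    finally have "?f ` carrier (dihedral m) = carrier G" .
    moreover have "?f \<in> hom ((dihedral m)\<lparr>carrier := carrier (dihedral m)\<rparr>) G"
      using dihedral_hom[OF gcar t(1) tt did3_conj_eq_inv[OF did3 R g(1) t]]
      by (simp add: dihedral_def)
    ultimately show ?thesis
      using is_section_of_if_hom_onto[OF D group.subgroup_self[OF D] is_group] by simp
  qed
qed

theorem mainTheorem5:
  fixes m :: nat
  assumes "odd m" and "m > 0"
  shows "group (dihedral m) \<and> satisfies_all m (dihedral m)
    \<and> (\<forall>H :: 'b monoid. group H \<and> satisfies_all m H \<longrightarrow> is_section_of H (dihedral m))"
proof (intro conjI allI impI)
  show "group (dihedral m)" using group_dihedral[OF assms(2)] .
  show "satisfies_all m (dihedral m)"
    unfolding satisfies_all_def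
    using dihedral_did1 dihedral_did2 dihedral_did3 dihedral_did4 dihedral_did5 by blast
  fix H :: "'b monoid" assume "group H \<and> satisfies_all m H"
  then show "is_section_of H (dihedral m)"
    using group.is_section_of_dihedral_if_satisfies_all assms by blast
qed

end
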